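(* Let $X$ be an irreducible positive recurrent Markov chain on a countable state space $S$ with transition matrix $P$ and stationary distribution $\pi$. Let $K=\{z\}$ and let $A\supseteq K$ be a finite subset of $S$, $A'=A\setminus K$, $T_K=\inf\{n\ge1:X_n=z\}$, $T=\inf\{n\ge1:X_n\notin A\}$. Let $r:S\to[0,\infty)$ and suppose there are non-negative functions $g_1,g_2$ on $K^c$ and $h_1,h_2$ on $A$ such that for all $x\in K^c$ $$\sum_{y\in K^c}P(x,y)g_1(y)\le g_1(x)-r(x),\qquad \sum_{y\in K^c}P(x,y)g_2(y)\le g_2(x)-1,$$ and for all $x\in A$ and $i=1,2$, $\sum_{y\in A^c}P(x,y)g_i(y)\le h_i(x)$. Write $h_i=(h_{i1},h_{i2})$ for the restrictions to $K$ and $A'$ and set $\beta_i(z)=h_{i1}(z)+(P_{12}(I-P_{22})^{-1}h_{i2})(z)$. For non-negative $f$ let $\underline\kappa(z,f)=E_z\sum_{j=0}^{(T\wedge T_K)-1}f(X_j)$ and $\tilde\pi(f)=\underline\kappa(z,f)/\underline\kappa(z,e)$ with $e\equiv 1$, and let $\pi^*$ be the probability on $S$ given by $\pi^*(x)=\tilde\pi(e_x)$, where $e_x$ is the indicator of $\{x\}$. Then $$\|\pi^*-\pi\|_r\le 2\max\left(\frac{\beta_1(z)}{\underline\kappa(z,e)},\ \tilde\pi(r)\cdot\frac{\beta_2(z)}{\underline\kappa(z,e)}\right).$$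
   Context: $E_z$ is expectation for the chain started at $z$. $P$ is written in block form with respect to $(K,A',A^c)$; $P_{12}$ is the $K\times A'$ block and $P_{22}$ the $A'\times A'$ block (with $I-P_{22}$ invertible). The $r$-weighted total variation distance is $\|\mu-\pi\|_r=\sup_{|f|\le r}\left|\sum_{x\in S}\mu(x)f(x)-\sum_{x\in S}\pi(x)f(x)\right|$. When $K$ is a singleton, both the Perron–Frobenius and row-normalized approximations of the paper reduce to $\pi^*$. *)

theory Defs
  imports "HOL-Probability.Probability"
begin

text \<open>Markov chain with transition kernel P (row x is the pmf P x, so P(x,y) = pmf (P x) y).
  walk P x n is the law of the path (X_0,...,X_n) of the chain started at X_0 = x.\<close>
fun walk :: "('a \<Rightarrow> 'a pmf) \<Rightarrow> 'a \<Rightarrow> nat \<Rightarrow> 'a list pmf" where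
  "walk P x 0 = return_pmf [x]"
| "walk P x (Suc n) = bind_pmf (walk P x n) (\<lambda>xs. map_pmf (\<lambda>y. xs @ [y]) (P (last xs)))"

definition nstep :: "('a \<Rightarrow> 'a pmf) \<Rightarrow> nat \<Rightarrow> 'a \<Rightarrow> 'a \<Rightarrow> real" where
  "nstep P n x y = pmf (map_pmf last (walk P x n)) y"

definition irreducible_chain :: "('a \<Rightarrow> 'a pmf) \<Rightarrow> bool" where
  "irreducible_chain P \<longleftrightarrow> (\<forall>x y. \<exists>n. nstep P n x y > 0)"

text \<open>occ P B f x = E_x sum_{j=0}^{tau-1} f(X_j), where tau = inf{n >= 1 : X_n \<notin> B}.
  Computed by monotone convergence as the supremum over horizons n of the expectation of
  the truncated sum sum_{j <= min(n, tau-1)} f(X_j); note j < tau iff X_1,...,X_j \<in> B.\<close>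
definition occ :: "('a \<Rightarrow> 'a pmf) \<Rightarrow> 'a set \<Rightarrow> ('a \<Rightarrow> real) \<Rightarrow> 'a \<Rightarrow> ennreal" where
  "occ P B f x = (SUP n. \<integral>\<^sup>+ xs. (\<Sum>j\<le>n. if (\<forall>i\<in>{1..j}. xs ! i \<in> B) then ennreal (f (xs ! j)) else 0)
                        \<partial>measure_pmf (walk P x n))"

text \<open>Positive recurrence: E_x T_x < \<infinity> with T_x = inf{n >= 1 : X_n = x}.\<close>
definition positive_recurrent :: "('a \<Rightarrow> 'a pmf) \<Rightarrow> bool" where
  "positive_recurrent P \<longleftrightarrow> (\<forall>x. occ P (- {x}) (\<lambda>_. 1) x < \<infinity>)"

definition stationary_distribution :: "('a \<Rightarrow> 'a pmf) \<Rightarrow> ('a \<Rightarrow> real) \<Rightarrow> bool" where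
  "stationary_distribution P \<pi> \<longleftrightarrow> (\<forall>x. \<pi> x \<ge> 0) \<and> (\<pi> has_sum 1) UNIV \<and>
     (\<forall>y. ((\<lambda>x. \<pi> x * pmf (P x) y) has_sum \<pi> y) UNIV)"

definition rtv :: "('a \<Rightarrow> real) \<Rightarrow> ('a \<Rightarrow> real) \<Rightarrow> ('a \<Rightarrow> real) \<Rightarrow> real" where
  "rtv r \<mu> \<nu> = Sup {\<bar>(\<Sum>\<^sub>\<infinity>x. \<mu> x * f x) - (\<Sum>\<^sub>\<infinity>x. \<nu> x * f x)\<bar> | f. \<forall>x. \<bar>f x\<bar> \<le> r x}"

definition IminusP22 :: "('a \<Rightarrow> 'a pmf) \<Rightarrow> 'a set \<Rightarrow> ('a \<Rightarrow> real) \<Rightarrow> ('a \<Rightarrow> real)" where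
  "IminusP22 P A' v = (\<lambda>x\<in>A'. v x - (\<Sum>y\<in>A'. pmf (P x) y * v y))"

definition IminusP22_invertible :: "('a \<Rightarrow> 'a pmf) \<Rightarrow> 'a set \<Rightarrow> bool" where
  "IminusP22_invertible P A' \<longleftrightarrow> bij_betw (IminusP22 P A') (extensional A') (extensional A')"

definition beta :: "('a \<Rightarrow> 'a pmf) \<Rightarrow> 'a set \<Rightarrow> 'a \<Rightarrow> ('a \<Rightarrow> real) \<Rightarrow> real" where
  "beta P A z h = (let A' = A - {z};
                       w = inv_into (extensional A') (IminusP22 P A') (restrict h A')
                   in h z + (\<Sum>y\<in>A'. pmf (P z) y * w y))"

end

(* With K = {z}, let G_B u (x) = E_x sum_{j < tau_B} u(X_j), where tau_B is the first time
   n >= 1 with X_n outside B ("green" below); then kappa(z, f) = G_{A'} f (z). By the cycle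
   formula, pi(f) = G_{K^c} f (z) / G_{K^c} 1 (z). The comparison theorem turns the drift
   conditions into G_{K^c} r <= g_1 and G_{K^c} 1 <= g_2 off K, and cutting an excursion from z
   at its first exit from A gives, for 0 <= f <= r,
     G_{A'} f (z) <= G_{K^c} f (z) <= G_{A'} f (z) + G_{A'} h_1 (z),
   and the same for f = 1 with h_2. As A is finite, G_{A'} h (z) = beta(z) by the Neumann series
   of (I - P_22)^{-1}. Writing f = f^+ - f^- and comparing the ratios G_{A'} f (z) / G_{A'} 1 (z)
   and G_{K^c} f (z) / G_{K^c} 1 (z) numerator by numerator gives the bound. *)

theory Submission
  imports Defs
begin

lemma nn_integral_count_space_eq_iff_has_sum:
  fixes f :: "'a \<Rightarrow> real"
  assumes nonneg: "\<And>x. x \<in> S \<Longrightarrow> 0 \<le> f x" and "0 \<le> s"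
  shows "(\<integral>\<^sup>+x. ennreal (f x) \<partial>count_space S) = ennreal s \<longleftrightarrow> (f has_sum s) S"
proof
  assume int: "(\<integral>\<^sup>+x. ennreal (f x) \<partial>count_space S) = ennreal s"
  have "(\<integral>\<^sup>+x. ennreal (norm (f x)) \<partial>count_space S) = ennreal s"
    using int nonneg by (subst nn_integral_cong[where v="\<lambda>x. ennreal (f x)"]) auto
  then have abs: "Infinite_Set_Sum.abs_summable_on f S"
    unfolding Infinite_Set_Sum.abs_summable_on_def by (intro integrableI_bounded) auto
  then have "f summable_on S"
    using abs_summable_equivalent summable_on_iff_abs_summable_on_real by blast
  moreover have "infsum f S = s"
    using infsetsum_infsum[OF abs] infsetsum_conv_nn_integral[of S f] int nonneg assms(2) by simp
  ultimately show "(f has_sum s) S" using has_sum_infsum by blast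
next
  assume sum: "(f has_sum s) S"
  then have abs: "Infinite_Set_Sum.abs_summable_on f S"
    using abs_summable_equivalent summable_on_iff_abs_summable_on_real summable_on_def by blast
  show "(\<integral>\<^sup>+x. ennreal (f x) \<partial>count_space S) = ennreal s"
    using nn_integral_conv_infsetsum[OF abs] nonneg infsetsum_infsum[OF abs] infsumI[OF sum] by simp
qed

lemma ennreal_INF_eq_0_of_suminf_finite:
  fixes a :: "nat \<Rightarrow> ennreal"
  assumes "suminf a < \<top>"
  shows "(INF n. a n) = 0"
proof (rule ccontr)
  define c where "c = (INF n. a n)"
  assume "(INF n. a n) \<noteq> 0"
  then have "c \<noteq> 0" by (simp add: c_def)
  have bound: "of_nat N * c \<le> suminf a" for N
  proof -
    have "of_nat N * c = (\<Sum>j<N. c)" by simp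
    also have "\<dots> \<le> (\<Sum>j<N. a j)" by (intro sum_mono) (simp add: c_def INF_lower)
    also have "\<dots> \<le> suminf a" by (rule sum_le_suminf) auto
    finally show ?thesis .
  qed
  have "c < \<top>" using bound[of 1] assms by simp
  have "suminf a / c < \<top>"
    using \<open>c \<noteq> 0\<close> assms by (simp add: ennreal_divide_eq_top_iff less_top[symmetric])
  then obtain N :: nat where "suminf a / c < of_nat N"
    using ennreal_Ex_less_of_nat by blast
  then have "suminf a < of_nat N * c" using \<open>c \<noteq> 0\<close> \<open>c < \<top>\<close> by (simp add: divide_less_ennreal)
  with bound[of N] show False by simp
qed

section \<open>The chain killed on leaving a set\<close>

lemma walk_set_pmf:
  assumes "xs \<in> set_pmf (walk P x n)"
  shows "length xs = Suc n \<and> xs ! 0 = x"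
  using assms
proof (induction n arbitrary: xs)
  case (Suc n)
  then obtain ys y where "ys \<in> set_pmf (walk P x n)" "xs = ys @ [y]" by auto
  with Suc.IH[of ys] show ?case by (simp add: nth_append)
qed simp

lemma walk_Suc_first: "walk P x (Suc n) = bind_pmf (P x) (\<lambda>y. map_pmf ((#) x) (walk P y n))"
proof (induction n)
  case 0
  show ?case by (simp add: map_pmf_def bind_return_pmf bind_assoc_pmf bind_return_pmf')
next
  case (Suc n)
  have step: "bind_pmf (map_pmf ((#) x) (walk P y n)) (\<lambda>xs. map_pmf (\<lambda>w. xs @ [w]) (P (last xs)))
      = map_pmf ((#) x) (walk P y (Suc n))" for y
  proof -
    have "last (x # ys) = last ys" if "ys \<in> set_pmf (walk P y n)" for ys
      using walk_set_pmf[OF that] by (cases ys) auto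
    then show ?thesis
      by (auto simp: bind_map_pmf map_bind_pmf map_pmf_comp intro!: bind_pmf_cong)
  qed
  show ?case
    by (simp only: walk.simps(2)[of P x "Suc n"] Suc bind_assoc_pmf step)
qed

definition killed_step :: "('a \<Rightarrow> 'a pmf) \<Rightarrow> 'a set \<Rightarrow> ('a \<Rightarrow> ennreal) \<Rightarrow> 'a \<Rightarrow> ennreal" where
  "killed_step P B u x = (\<integral>\<^sup>+y. indicator B y * u y \<partial>measure_pmf (P x))"

definition green :: "('a \<Rightarrow> 'a pmf) \<Rightarrow> 'a set \<Rightarrow> ('a \<Rightarrow> ennreal) \<Rightarrow> 'a \<Rightarrow> ennreal" where
  "green P B u x = (\<Sum>j. (killed_step P B ^^ j) u x)"

lemma nn_integral_walk_Suc_first: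
  "(\<integral>\<^sup>+xs. F xs \<partial>measure_pmf (walk P x (Suc n)))
     = (\<integral>\<^sup>+y. \<integral>\<^sup>+ys. F (x # ys) \<partial>measure_pmf (walk P y n) \<partial>measure_pmf (P x))"
  by (simp only: walk_Suc_first nn_integral_bind_pmf nn_integral_map_pmf)

lemma ball_nth_Cons_Suc:
  "(\<forall>i\<in>{1..Suc k}. (x # ys) ! i \<in> B) \<longleftrightarrow> ys ! 0 \<in> B \<and> (\<forall>i\<in>{1..k}. ys ! i \<in> B)"
proof -
  have "(\<forall>i\<in>{1..Suc k}. (x # ys) ! i \<in> B) \<longleftrightarrow> (\<forall>i\<in>{0..k}. ys ! i \<in> B)"
    by (auto simp: Ball_def Suc_le_eq nth_Cons split: nat.split)
  moreover have "{0..k} = insert 0 {1..k}" by auto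
  ultimately show ?thesis by simp
qed

lemma nn_integral_walk_killed_step_power:
  assumes "j \<le> n"
  shows "(\<integral>\<^sup>+xs. (if \<forall>i\<in>{1..j}. xs ! i \<in> B then u (xs ! j) else 0) \<partial>measure_pmf (walk P x n))
       = (killed_step P B ^^ j) u x"
  using assms
proof (induction n arbitrary: x j)
  case (Suc n)
  show ?case
  proof (cases j)
    case 0
    have "(if \<forall>i\<in>{1..j}. xs ! i \<in> B then u (xs ! j) else 0) = u x"
      if "xs \<in> set_pmf (walk P x (Suc n))" for xs
      using walk_set_pmf[OF that] 0 by simp
    then have "(\<integral>\<^sup>+xs. (if \<forall>i\<in>{1..j}. xs ! i \<in> B then u (xs ! j) else 0) \<partial>measure_pmf (walk P x (Suc n)))
        = (\<integral>\<^sup>+xs. u x \<partial>measure_pmf (walk P x (Suc n)))"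
      by (rule nn_integral_cong_AE[OF AE_pmfI])
    then show ?thesis using 0 by simp
  next
    case (Suc k)
    have step: "(\<integral>\<^sup>+ys. (if \<forall>i\<in>{1..j}. (x # ys) ! i \<in> B then u ((x # ys) ! j) else 0)
          \<partial>measure_pmf (walk P y n))
        = indicator B y * (\<integral>\<^sup>+ys. (if \<forall>i\<in>{1..k}. ys ! i \<in> B then u (ys ! k) else 0)
          \<partial>measure_pmf (walk P y n))" for y
    proof -
      have "(if \<forall>i\<in>{1..j}. (x # ys) ! i \<in> B then u ((x # ys) ! j) else 0)
          = indicator B y * (if \<forall>i\<in>{1..k}. ys ! i \<in> B then u (ys ! k) else 0)"
        if "ys \<in> set_pmf (walk P y n)" for ys
        using walk_set_pmf[OF that] unfolding Suc ball_nth_Cons_Suc nth_Cons_Suc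
        by (simp split: split_indicator)
      then have "(\<integral>\<^sup>+ys. (if \<forall>i\<in>{1..j}. (x # ys) ! i \<in> B then u ((x # ys) ! j) else 0)
            \<partial>measure_pmf (walk P y n))
          = (\<integral>\<^sup>+ys. indicator B y * (if \<forall>i\<in>{1..k}. ys ! i \<in> B then u (ys ! k) else 0)
            \<partial>measure_pmf (walk P y n))"
        by (rule nn_integral_cong_AE[OF AE_pmfI])
      then show ?thesis by (simp add: nn_integral_cmult)
    qed
    have "(\<integral>\<^sup>+xs. (if \<forall>i\<in>{1..j}. xs ! i \<in> B then u (xs ! j) else 0) \<partial>measure_pmf (walk P x (Suc n)))
        = (\<integral>\<^sup>+y. indicator B y * (\<integral>\<^sup>+ys. (if \<forall>i\<in>{1..k}. ys ! i \<in> B then u (ys ! k) else 0)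
             \<partial>measure_pmf (walk P y n)) \<partial>measure_pmf (P x))"
      by (simp only: nn_integral_walk_Suc_first step)
    also have "\<dots> = (\<integral>\<^sup>+y. indicator B y * (killed_step P B ^^ k) u y \<partial>measure_pmf (P x))"
      using Suc.IH[where j=k] Suc.prems \<open>j = Suc k\<close> by simp
    also have "\<dots> = (killed_step P B ^^ j) u x"
      by (simp only: \<open>j = Suc k\<close> funpow.simps comp_def) (rule killed_step_def[symmetric])
    finally show ?thesis .
  qed
qed simp

lemma occ_eq_green: "occ P B f x = green P B (\<lambda>y. ennreal (f y)) x"
proof -
  let ?a = "\<lambda>j. (killed_step P B ^^ j) (\<lambda>y. ennreal (f y)) x"
  have "occ P B f x = (SUP n. \<Sum>j\<le>n. ?a j)"
    unfolding occ_def
    by (intro SUP_cong refl, subst nn_integral_sum, simp, rule sum.cong[OF refl],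
        rule nn_integral_walk_killed_step_power[where u="\<lambda>y. ennreal (f y)"], simp)
  also have "\<dots> = green P B (\<lambda>y. ennreal (f y)) x"
    unfolding green_def
    by (rule LIMSEQ_unique[OF LIMSEQ_SUP summable_LIMSEQ']) (auto intro!: incseq_SucI)
  finally show ?thesis .
qed

lemma killed_step_mono:
  assumes "\<And>y. y \<in> B \<Longrightarrow> u y \<le> v y"
  shows "killed_step P B u x \<le> killed_step P B v x"
  unfolding killed_step_def
  by (intro nn_integral_mono) (use assms in \<open>auto split: split_indicator\<close>)

lemma killed_step_cong:
  assumes "\<And>y. y \<in> B \<Longrightarrow> u y = v y"
  shows "killed_step P B u x = killed_step P B v x"
  by (intro antisym killed_step_mono) (simp_all add: assms)

lemma killed_step_mono_set:
  assumes "B1 \<subseteq> B0"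
  shows "killed_step P B1 u x \<le> killed_step P B0 u x"
  unfolding killed_step_def
  by (intro nn_integral_mono) (use assms in \<open>auto split: split_indicator\<close>)

lemma killed_step_add: "killed_step P B (\<lambda>y. u y + v y) x = killed_step P B u x + killed_step P B v x"
  unfolding killed_step_def by (simp add: distrib_left nn_integral_add)

lemma killed_step_sum: "killed_step P B (\<lambda>y. \<Sum>j\<in>J. w j y) x = (\<Sum>j\<in>J. killed_step P B (w j) x)"
  unfolding killed_step_def by (simp add: sum_distrib_left nn_integral_sum)

lemma killed_step_suminf: "killed_step P B (\<lambda>y. \<Sum>j. w j y) x = (\<Sum>j. killed_step P B (w j) x)"
  unfolding killed_step_def ennreal_suminf_cmult[symmetric] by (rule nn_integral_suminf) simp

lemma killed_step_split:
  assumes "B1 \<subseteq> B0"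
  shows "killed_step P B0 u x = killed_step P B1 u x + killed_step P (B0 - B1) u x"
proof -
  have "indicator B0 y * u y = indicator B1 y * u y + indicator (B0 - B1) y * u y" for y
    using assms by (auto split: split_indicator)
  then show ?thesis unfolding killed_step_def by (simp add: nn_integral_add)
qed

lemma killed_step_infsum:
  fixes g :: "'a \<Rightarrow> real"
  assumes "\<And>y. y \<in> B \<Longrightarrow> 0 \<le> g y" "(\<lambda>y. pmf (P x) y * g y) summable_on B"
  shows "killed_step P B (\<lambda>y. ennreal (g y)) x = ennreal (\<Sum>\<^sub>\<infinity>y\<in>B. pmf (P x) y * g y)"
proof -
  have "killed_step P B (\<lambda>y. ennreal (g y)) x
      = (\<integral>\<^sup>+y. ennreal (pmf (P x) y * g y) * indicator B y \<partial>count_space UNIV)"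
    unfolding killed_step_def nn_integral_measure_pmf
    by (intro nn_integral_cong) (auto simp: ennreal_mult assms(1) split: split_indicator)
  also have "\<dots> = (\<integral>\<^sup>+y. ennreal (pmf (P x) y * g y) \<partial>count_space B)"
    by (rule nn_integral_count_space_indicator[symmetric]) simp
  also have "\<dots> = ennreal (\<Sum>\<^sub>\<infinity>y\<in>B. pmf (P x) y * g y)"
    using assms by (subst nn_integral_count_space_eq_iff_has_sum) (auto intro: infsum_nonneg)
  finally show ?thesis .
qed

lemma killed_step_power_mono_on:
  assumes "\<And>y. y \<in> S \<Longrightarrow> u y \<le> v y" "B \<subseteq> S" "x \<in> S"
  shows "(killed_step P B ^^ j) u x \<le> (killed_step P B ^^ j) v x"
  using assms(3)
proof (induction j arbitrary: x)
  case 0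
  then show ?case using assms(1) by simp
next
  case (Suc j)
  then show ?case using assms(2) by (auto intro!: killed_step_mono)
qed

lemma killed_step_power_mono_set:
  assumes "B1 \<subseteq> B0"
  shows "(killed_step P B1 ^^ j) u x \<le> (killed_step P B0 ^^ j) u x"
proof (induction j arbitrary: x)
  case (Suc j)
  have "killed_step P B1 ((killed_step P B1 ^^ j) u) x \<le> killed_step P B1 ((killed_step P B0 ^^ j) u) x"
    by (rule killed_step_mono) (rule Suc.IH)
  also have "\<dots> \<le> killed_step P B0 ((killed_step P B0 ^^ j) u) x"
    by (rule killed_step_mono_set[OF assms])
  finally show ?case by simp
qed simp

lemma killed_step_power_add:
  "(killed_step P B ^^ j) (\<lambda>y. u y + v y) x = (killed_step P B ^^ j) u x + (killed_step P B ^^ j) v x"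
proof (induction j arbitrary: x)
  case (Suc j)
  have "(killed_step P B ^^ j) (\<lambda>y. u y + v y) = (\<lambda>y. (killed_step P B ^^ j) u y + (killed_step P B ^^ j) v y)"
    by (rule ext) (rule Suc.IH)
  then show ?case by (simp add: killed_step_add)
qed simp

lemma killed_step_zero: "killed_step P B (\<lambda>_. 0) = (\<lambda>_. 0)"
  by (rule ext) (simp add: killed_step_def)

lemma killed_step_power_zero: "(killed_step P B ^^ j) (\<lambda>_. 0) = (\<lambda>_. 0)"
  by (induction j) (simp_all add: killed_step_zero)

lemma killed_step_power_eq_nn_integral:
  fixes P :: "'a::countable \<Rightarrow> 'a pmf"
  shows "(killed_step P B ^^ j) u x
       = (\<integral>\<^sup>+y. u y * (killed_step P B ^^ j) (indicator {y}) x \<partial>count_space UNIV)"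
proof (induction j arbitrary: x)
  case 0
  have "(\<integral>\<^sup>+y. u y * indicator {y} x \<partial>count_space UNIV) = (\<integral>\<^sup>+y. u y * indicator {x} y \<partial>count_space UNIV)"
    by (intro nn_integral_cong) (simp split: split_indicator)
  then show ?case by simp
next
  case (Suc j)
  have IH: "(killed_step P B ^^ j) u
      = (\<lambda>w. \<integral>\<^sup>+y. u y * (killed_step P B ^^ j) (indicator {y}) w \<partial>count_space UNIV)"
    by (rule ext) (rule Suc.IH)
  have "(killed_step P B ^^ Suc j) u x
      = (\<integral>\<^sup>+w. indicator B w * (\<integral>\<^sup>+y. u y * (killed_step P B ^^ j) (indicator {y}) w
           \<partial>count_space UNIV) \<partial>measure_pmf (P x))"
    by (simp only: funpow.simps comp_def IH) (rule killed_step_def)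
  also have "\<dots> = (\<integral>\<^sup>+w. \<integral>\<^sup>+y. u y * (indicator B w * (killed_step P B ^^ j) (indicator {y}) w)
           \<partial>count_space UNIV \<partial>measure_pmf (P x))"
    by (intro nn_integral_cong) (simp add: nn_integral_cmult[symmetric] ac_simps)
  also have "\<dots> = (\<integral>\<^sup>+y. \<integral>\<^sup>+w. u y * (indicator B w * (killed_step P B ^^ j) (indicator {y}) w)
           \<partial>measure_pmf (P x) \<partial>count_space UNIV)"
    by (rule nn_integral_count_space_nn_integral) auto
  also have "\<dots> = (\<integral>\<^sup>+y. u y * (killed_step P B ^^ Suc j) (indicator {y}) x \<partial>count_space UNIV)"
    by (intro nn_integral_cong) (simp add: nn_integral_cmult killed_step_def)
  finally show ?case .
qed

lemma green_unfold: "green P B u x = u x + killed_step P B (green P B u) x"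
proof -
  have "(\<lambda>j. (killed_step P B ^^ j) u x)
      sums ((\<Sum>j. (killed_step P B ^^ Suc j) u x) + (killed_step P B ^^ 0) u x)"
    by (rule sums_Suc) (rule summable_sums, simp)
  then have "green P B u x = u x + (\<Sum>j. (killed_step P B ^^ Suc j) u x)"
    unfolding green_def by (simp add: sums_unique[symmetric] add.commute)
  also have "(\<Sum>j. (killed_step P B ^^ Suc j) u x) = killed_step P B (green P B u) x"
    unfolding green_def killed_step_suminf by simp
  finally show ?thesis .
qed

lemma green_partial_sum_le: "(\<Sum>j<N. (killed_step P B ^^ j) u x) \<le> green P B u x"
  unfolding green_def by (rule sum_le_suminf) auto

lemma green_mono_on:
  assumes "\<And>y. y \<in> S \<Longrightarrow> u y \<le> v y" "B \<subseteq> S" "x \<in> S"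
  shows "green P B u x \<le> green P B v x"
  unfolding green_def by (intro suminf_le killed_step_power_mono_on[OF assms]) auto

lemma green_mono_set: "B1 \<subseteq> B0 \<Longrightarrow> green P B1 u x \<le> green P B0 u x"
  unfolding green_def by (intro suminf_le killed_step_power_mono_set) auto

lemma green_add: "green P B (\<lambda>y. u y + v y) x = green P B u x + green P B v x"
  unfolding green_def by (simp add: killed_step_power_add suminf_add)

lemma green_zero: "green P B (\<lambda>_. 0) x = 0"
  unfolding green_def by (simp add: killed_step_power_zero)

lemma green_eq_nn_integral:
  fixes P :: "'a::countable \<Rightarrow> 'a pmf"
  shows "green P B u x = (\<integral>\<^sup>+y. u y * green P B (indicator {y}) x \<partial>count_space UNIV)"
  unfolding green_def
  by (subst killed_step_power_eq_nn_integral, subst nn_integral_suminf[symmetric])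
    (simp_all add: ennreal_suminf_cmult)

lemma green_eq_sum:
  fixes P :: "'a::countable \<Rightarrow> 'a pmf"
  assumes "finite B"
  shows "green P B u x = (\<Sum>y\<in>insert x B. u y * green P B (indicator {y}) x)"
proof -
  have zero: "green P B (indicator {y}) x = 0" if "y \<notin> insert x B" for y
  proof -
    have "green P B (indicator {y}) x \<le> green P B (\<lambda>_. 0) x"
      by (rule green_mono_on[where S="insert x B"]) (use that in \<open>auto split: split_indicator\<close>)
    then show ?thesis by (simp add: green_zero)
  qed
  show ?thesis
    unfolding green_eq_nn_integral[of P B u x]
    by (rule nn_integral_count_space') (simp_all add: assms zero)
qed

lemma green_le_supersolution:
  assumes super: "\<And>y. y \<in> B \<Longrightarrow> u y + killed_step P B g y \<le> g y" and "x \<in> B"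
  shows "green P B u x \<le> g x"
proof -
  have partial: "(\<Sum>j<N. (killed_step P B ^^ j) u y) + (killed_step P B ^^ N) g y \<le> g y"
    if "y \<in> B" for N y
    using that
  proof (induction N arbitrary: y)
    case (Suc N)
    have "(\<Sum>j<Suc N. (killed_step P B ^^ j) u y) + (killed_step P B ^^ Suc N) g y
        = u y + killed_step P B (\<lambda>w. (\<Sum>j<N. (killed_step P B ^^ j) u w) + (killed_step P B ^^ N) g w) y"
      unfolding sum.lessThan_Suc_shift by (simp add: killed_step_add killed_step_sum add.assoc)
    also have "\<dots> \<le> u y + killed_step P B g y"
      by (intro add_left_mono killed_step_mono Suc.IH)
    also have "\<dots> \<le> g y" using super Suc.prems .
    finally show ?case .
  qed simp
  have "(\<Sum>j<N. (killed_step P B ^^ j) u x) \<le> g x" for N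
    by (rule order_trans[OF _ partial[where y=x and N=N, OF \<open>x \<in> B\<close>]]) simp
  then show ?thesis
    unfolding green_def suminf_eq_SUP by (rule SUP_least)
qed

lemma green_le_resolvent:
  assumes "B1 \<subseteq> B0"
  shows "green P B0 u x \<le> green P B1 (\<lambda>y. u y + killed_step P (B0 - B1) (green P B0 u) y) x"
proof -
  define H where "H = green P B1 (\<lambda>y. u y + killed_step P (B0 - B1) (green P B0 u) y)"
  have "(\<Sum>j<N. (killed_step P B0 ^^ j) u y) \<le> H y" for N y
  proof (induction N arbitrary: y)
    case (Suc N)
    let ?S = "\<lambda>y. \<Sum>j<N. (killed_step P B0 ^^ j) u y"
    have "(\<Sum>j<Suc N. (killed_step P B0 ^^ j) u y) = u y + killed_step P B0 ?S y"
      unfolding sum.lessThan_Suc_shift by (simp add: killed_step_sum)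
    also have "\<dots> = u y + killed_step P B1 ?S y + killed_step P (B0 - B1) ?S y"
      by (simp add: killed_step_split[OF assms] add.assoc)
    also have "\<dots> \<le> u y + killed_step P B1 H y + killed_step P (B0 - B1) (green P B0 u) y"
      by (intro add_mono order_refl killed_step_mono Suc.IH green_partial_sum_le)
    also have "\<dots> = H y"
      unfolding H_def
      using green_unfold[of P B1 "\<lambda>y. u y + killed_step P (B0 - B1) (green P B0 u) y" y]
      by (simp add: ac_simps)
    finally show ?case .
  qed simp
  then show ?thesis
    unfolding H_def green_def[of P B0] suminf_eq_SUP by (rule SUP_least)
qed

section \<open>The cycle formula\<close>

lemma stationary_nn_integral_one:
  assumes "stationary_distribution P \<pi>"
  shows "(\<integral>\<^sup>+x. \<pi> x \<partial>count_space UNIV) = 1"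
  using nn_integral_count_space_eq_iff_has_sum[of UNIV \<pi> 1] assms
  by (simp add: stationary_distribution_def)

lemma stationary_nn_integral_split:
  fixes P :: "'a::countable \<Rightarrow> 'a pmf"
  assumes stat: "stationary_distribution P \<pi>"
  shows "(\<integral>\<^sup>+x. \<pi> x * u x \<partial>count_space UNIV)
       = \<pi> z * u z + (\<integral>\<^sup>+x. \<pi> x * killed_step P (-{z}) u x \<partial>count_space UNIV)"
proof -
  have pos: "0 \<le> \<pi> x" for x using stat by (simp add: stationary_distribution_def)
  have inflow: "(\<integral>\<^sup>+x. ennreal (\<pi> x) * ennreal (pmf (P x) y) \<partial>count_space UNIV) = \<pi> y" for y
  proof -
    have "((\<lambda>x. \<pi> x * pmf (P x) y) has_sum \<pi> y) UNIV"
      using stat by (simp add: stationary_distribution_def)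
    then have "(\<integral>\<^sup>+x. ennreal (\<pi> x * pmf (P x) y) \<partial>count_space UNIV) = \<pi> y"
      using pos by (subst nn_integral_count_space_eq_iff_has_sum) auto
    then show ?thesis using pos by (simp add: ennreal_mult)
  qed
  have "(\<integral>\<^sup>+x. \<pi> x * killed_step P (-{z}) u x \<partial>count_space UNIV)
      = (\<integral>\<^sup>+x. \<integral>\<^sup>+w. \<pi> x * (pmf (P x) w * (indicator (-{z}) w * u w))
           \<partial>count_space UNIV \<partial>count_space UNIV)"
    unfolding killed_step_def nn_integral_measure_pmf
    by (intro nn_integral_cong) (simp add: nn_integral_cmult)
  also have "\<dots> = (\<integral>\<^sup>+w. \<integral>\<^sup>+x. \<pi> x * (pmf (P x) w * (indicator (-{z}) w * u w))
           \<partial>count_space UNIV \<partial>count_space UNIV)"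
    by (rule nn_integral_count_space_nn_integral) auto
  also have "\<dots> = (\<integral>\<^sup>+w. (indicator (-{z}) w * u w)
           * (\<integral>\<^sup>+x. \<pi> x * ennreal (pmf (P x) w) \<partial>count_space UNIV) \<partial>count_space UNIV)"
    by (intro nn_integral_cong) (simp add: nn_integral_cmult[symmetric] ac_simps)
  also have "\<dots> = (\<integral>\<^sup>+w. \<pi> w * u w * indicator (-{z}) w \<partial>count_space UNIV)"
    by (simp add: inflow ac_simps)
  finally have outside: "(\<integral>\<^sup>+x. \<pi> x * killed_step P (-{z}) u x \<partial>count_space UNIV)
      = (\<integral>\<^sup>+w. \<pi> w * u w * indicator (-{z}) w \<partial>count_space UNIV)" .
  have "(\<integral>\<^sup>+x. \<pi> x * u x \<partial>count_space UNIV)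
      = (\<integral>\<^sup>+w. \<pi> w * u w * indicator {z} w + \<pi> w * u w * indicator (-{z}) w \<partial>count_space UNIV)"
    by (intro nn_integral_cong) (simp split: split_indicator)
  also have "\<dots> = \<pi> z * u z + (\<integral>\<^sup>+x. \<pi> x * killed_step P (-{z}) u x \<partial>count_space UNIV)"
    by (simp add: nn_integral_add outside)
  finally show ?thesis .
qed

lemma stationary_nn_integral_iterate:
  fixes P :: "'a::countable \<Rightarrow> 'a pmf"
  assumes "stationary_distribution P \<pi>"
  shows "(\<integral>\<^sup>+x. \<pi> x * u x \<partial>count_space UNIV)
       = \<pi> z * (\<Sum>j<N. (killed_step P (-{z}) ^^ j) u z)
         + (\<integral>\<^sup>+x. \<pi> x * (killed_step P (-{z}) ^^ N) u x \<partial>count_space UNIV)"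
proof (induction N)
  case (Suc N)
  then show ?case
    using stationary_nn_integral_split[OF assms, of "(killed_step P (-{z}) ^^ N) u" z]
    by (simp add: distrib_left add.assoc)
qed simp

lemma stationary_killed_remainder_INF:
  fixes P :: "'a::countable \<Rightarrow> 'a pmf"
  assumes stat: "stationary_distribution P \<pi>"
    and fin: "\<And>x. green P (-{z}) (\<lambda>_. 1) x < \<top>"
  shows "(INF N. \<integral>\<^sup>+x. \<pi> x * (killed_step P (-{z}) ^^ N) (\<lambda>_. 1) x \<partial>count_space UNIV) = 0"
proof -
  let ?Q = "killed_step P (-{z})"
  have Q_one: "?Q (\<lambda>_. 1) x \<le> 1" for x
  proof -
    have "?Q (\<lambda>_. 1) x \<le> (\<integral>\<^sup>+w. 1 \<partial>measure_pmf (P x))"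
      unfolding killed_step_def by (intro nn_integral_mono) (simp split: split_indicator)
    then show ?thesis by simp
  qed
  have decr: "?Q ((?Q ^^ N) (\<lambda>_. 1)) x \<le> (?Q ^^ N) (\<lambda>_. 1) x" for N x
    unfolding funpow_swap1
    by (rule killed_step_power_mono_on[where S=UNIV]) (simp_all add: Q_one)
  have "(\<integral>\<^sup>+x. (INF N. \<pi> x * (?Q ^^ N) (\<lambda>_. 1) x) \<partial>count_space UNIV)
      = (INF N. \<integral>\<^sup>+x. \<pi> x * (?Q ^^ N) (\<lambda>_. 1) x \<partial>count_space UNIV)"
    using stationary_nn_integral_one[OF stat]
    by (intro nn_integral_monotone_convergence_INF_AE') (auto intro!: AE_I2 mult_left_mono decr)
  moreover have "(INF N. \<pi> x * (?Q ^^ N) (\<lambda>_. 1) x) = 0" for x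
    using fin[of x]
    by (intro ennreal_INF_eq_0_of_suminf_finite) (simp add: green_def ennreal_mult_less_top)
  ultimately show ?thesis by simp
qed

lemma stationary_nn_integral_eq_green_bounded:
  fixes P :: "'a::countable \<Rightarrow> 'a pmf"
  assumes stat: "stationary_distribution P \<pi>"
    and fin: "\<And>x. green P (-{z}) (\<lambda>_. 1) x < \<top>"
    and le1: "\<And>x. u x \<le> 1"
  shows "(\<integral>\<^sup>+x. \<pi> x * u x \<partial>count_space UNIV) = \<pi> z * green P (-{z}) u z"
proof (rule antisym)
  let ?Q = "killed_step P (-{z})"
  let ?R = "\<lambda>N. \<integral>\<^sup>+x. \<pi> x * (?Q ^^ N) (\<lambda>_. 1) x \<partial>count_space UNIV"
  have "(\<integral>\<^sup>+x. \<pi> x * u x \<partial>count_space UNIV) \<le> \<pi> z * green P (-{z}) u z + ?R N" for N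
    unfolding stationary_nn_integral_iterate[OF stat, of u z N]
    by (intro add_mono mult_left_mono green_partial_sum_le nn_integral_mono
        killed_step_power_mono_on[where S=UNIV]) (simp_all add: le1)
  then have "(\<integral>\<^sup>+x. \<pi> x * u x \<partial>count_space UNIV) \<le> (INF N. \<pi> z * green P (-{z}) u z + ?R N)"
    by (rule INF_greatest)
  also have "\<dots> = \<pi> z * green P (-{z}) u z"
    by (simp add: INF_ennreal_const_add stationary_killed_remainder_INF[OF stat fin])
  finally show "(\<integral>\<^sup>+x. \<pi> x * u x \<partial>count_space UNIV) \<le> \<pi> z * green P (-{z}) u z" .
next
  have "\<pi> z * (\<Sum>j<N. (killed_step P (-{z}) ^^ j) u z) \<le> (\<integral>\<^sup>+x. \<pi> x * u x \<partial>count_space UNIV)" for N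
    using stationary_nn_integral_iterate[OF stat, of u z N] le_iff_add by blast
  then show "\<pi> z * green P (-{z}) u z \<le> (\<integral>\<^sup>+x. \<pi> x * u x \<partial>count_space UNIV)"
    unfolding green_def suminf_eq_SUP SUP_mult_left_ennreal by (rule SUP_least)
qed

lemma stationary_nn_integral_eq_green:
  fixes P :: "'a::countable \<Rightarrow> 'a pmf"
  assumes stat: "stationary_distribution P \<pi>"
    and fin: "\<And>x. green P (-{z}) (\<lambda>_. 1) x < \<top>"
  shows "(\<integral>\<^sup>+x. \<pi> x * u x \<partial>count_space UNIV) = \<pi> z * green P (-{z}) u z"
proof -
  have point: "ennreal (\<pi> y) = \<pi> z * green P (-{z}) (indicator {y}) z" for y
    using stationary_nn_integral_eq_green_bounded[OF stat fin, of "indicator {y}"]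
    by (simp split: split_indicator)
  have "(\<integral>\<^sup>+x. \<pi> x * u x \<partial>count_space UNIV)
      = (\<integral>\<^sup>+y. \<pi> z * (u y * green P (-{z}) (indicator {y}) z) \<partial>count_space UNIV)"
    by (intro nn_integral_cong) (subst point, simp add: ac_simps)
  also have "\<dots> = \<pi> z * green P (-{z}) u z"
    by (simp add: nn_integral_cmult green_eq_nn_integral[of P "-{z}" u z])
  finally show ?thesis .
qed

lemma stationary_has_sum_green:
  fixes P :: "'a::countable \<Rightarrow> 'a pmf" and g :: "'a \<Rightarrow> real"
  assumes stat: "stationary_distribution P \<pi>"
    and fin: "\<And>x. green P (-{z}) (\<lambda>_. 1) x < \<top>"
    and g: "\<And>x. 0 \<le> g x" and fin_g: "green P (-{z}) (\<lambda>y. ennreal (g y)) z < \<top>"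
  shows "((\<lambda>x. \<pi> x * g x) has_sum \<pi> z * enn2real (green P (-{z}) (\<lambda>y. ennreal (g y)) z)) UNIV"
proof -
  have pos: "0 \<le> \<pi> x" for x using stat by (simp add: stationary_distribution_def)
  have "(\<integral>\<^sup>+x. ennreal (\<pi> x * g x) \<partial>count_space UNIV)
      = \<pi> z * green P (-{z}) (\<lambda>y. ennreal (g y)) z"
    using stationary_nn_integral_eq_green[OF stat fin, of "\<lambda>y. ennreal (g y)"] pos g
    by (simp add: ennreal_mult)
  also have "\<dots> = ennreal (\<pi> z * enn2real (green P (-{z}) (\<lambda>y. ennreal (g y)) z))"
    using pos fin_g by (simp add: ennreal_mult less_top)
  finally show ?thesis
    using pos g by (subst (asm) nn_integral_count_space_eq_iff_has_sum) auto
qed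

lemma stationary_has_sum_green_ratio:
  fixes P :: "'a::countable \<Rightarrow> 'a pmf" and g :: "'a \<Rightarrow> real"
  assumes stat: "stationary_distribution P \<pi>"
    and fin: "\<And>x. green P (-{z}) (\<lambda>_. 1) x < \<top>"
    and g: "\<forall>x. 0 \<le> g x" and fin_g: "green P (-{z}) (\<lambda>y. ennreal (g y)) z < \<top>"
  shows "((\<lambda>x. \<pi> x * g x) has_sum
           enn2real (green P (-{z}) (\<lambda>y. ennreal (g y)) z) / enn2real (green P (-{z}) (\<lambda>_. 1) z)) UNIV"
proof -
  have "\<pi> z * enn2real (green P (-{z}) (\<lambda>_. 1) z) = 1"
    using has_sum_unique[OF stationary_has_sum_green[OF stat fin, of "\<lambda>_. 1"]] stat fin
    by (simp add: stationary_distribution_def)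
  then have "\<pi> z = 1 / enn2real (green P (-{z}) (\<lambda>_. 1) z)"
    by (cases "enn2real (green P (-{z}) (\<lambda>_. 1) z) = 0") (simp_all add: field_simps)
  then show ?thesis
    using stationary_has_sum_green[OF stat fin, of g] g fin_g by simp
qed

section \<open>The Neumann series of the taboo block\<close>

text \<open>At a state outside \<open>A'\<close>, in particular at \<open>z\<close>, this is the block \<open>P\<^sub>1\<^sub>2\<close>.\<close>
definition P22 :: "('a \<Rightarrow> 'a pmf) \<Rightarrow> 'a set \<Rightarrow> ('a \<Rightarrow> real) \<Rightarrow> 'a \<Rightarrow> real" where
  "P22 P A' v x = (\<Sum>y\<in>A'. pmf (P x) y * v y)"

lemma IminusP22_eq: "IminusP22 P A' v = restrict (\<lambda>x. v x - P22 P A' v x) A'"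
  by (simp add: IminusP22_def P22_def)

lemma P22_cong: "(\<And>y. y \<in> A' \<Longrightarrow> u y = v y) \<Longrightarrow> P22 P A' u x = P22 P A' v x"
  unfolding P22_def by (intro sum.cong) auto

lemma P22_diff: "P22 P A' (\<lambda>y. u y - v y) x = P22 P A' u x - P22 P A' v x"
  unfolding P22_def by (simp add: right_diff_distrib sum_subtractf)

lemma P22_sum: "P22 P A' (\<lambda>y. \<Sum>j\<in>J. w j y) x = (\<Sum>j\<in>J. P22 P A' (w j) x)"
  unfolding P22_def by (simp add: sum_distrib_left sum.swap[of _ A'])

lemma P22_sums:
  assumes "\<And>y. y \<in> A' \<Longrightarrow> (\<lambda>j. w j y) sums s y"
  shows "(\<lambda>j. P22 P A' (w j) x) sums P22 P A' s x"
  unfolding P22_def by (intro sums_sum sums_mult assms)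

lemma P22_nonneg: "(\<And>y. y \<in> A' \<Longrightarrow> 0 \<le> v y) \<Longrightarrow> 0 \<le> P22 P A' v x"
  unfolding P22_def by (intro sum_nonneg) auto

lemma P22_power_nonneg:
  "(\<And>y. y \<in> A' \<Longrightarrow> 0 \<le> v y) \<Longrightarrow> y \<in> A' \<Longrightarrow> 0 \<le> (P22 P A' ^^ j) v y"
  by (induction j arbitrary: y) (auto intro: P22_nonneg)

lemma P22_power_bounded:
  assumes "finite A'" and bound: "\<And>y. y \<in> A' \<Longrightarrow> \<bar>v y\<bar> \<le> c" and "x \<in> A'"
  shows "\<bar>(P22 P A' ^^ j) v x\<bar> \<le> c"
  using assms(3)
proof (induction j arbitrary: x)
  case (Suc j)
  have "0 \<le> c" using bound[OF Suc.prems] by linarith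
  have "\<bar>P22 P A' ((P22 P A' ^^ j) v) x\<bar> \<le> (\<Sum>y\<in>A'. pmf (P x) y * \<bar>(P22 P A' ^^ j) v y\<bar>)"
    unfolding P22_def by (rule order_trans[OF sum_abs]) (simp add: abs_mult)
  also have "\<dots> \<le> (\<Sum>y\<in>A'. pmf (P x) y) * c"
    unfolding sum_distrib_right by (intro sum_mono mult_left_mono Suc.IH) auto
  also have "\<dots> \<le> c"
  proof (rule mult_left_le_one_le[OF \<open>0 \<le> c\<close>])
    show "0 \<le> (\<Sum>y\<in>A'. pmf (P x) y)" by (simp add: sum_nonneg)
    show "(\<Sum>y\<in>A'. pmf (P x) y) \<le> 1"
      using measure_pmf.prob_le_1[of "P x" A'] assms(1) by (simp add: measure_measure_pmf_finite)
  qed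
  finally show ?case by simp
qed (use bound in simp)

lemma killed_step_eq_P22:
  assumes "finite A'" "\<And>y. y \<in> A' \<Longrightarrow> 0 \<le> v y"
  shows "killed_step P A' (\<lambda>y. ennreal (v y)) x = ennreal (P22 P A' v x)"
proof -
  have "killed_step P A' (\<lambda>y. ennreal (v y)) x
      = (\<integral>\<^sup>+y. ennreal (pmf (P x) y) * ennreal (v y) * indicator A' y \<partial>count_space UNIV)"
    unfolding killed_step_def nn_integral_measure_pmf by (intro nn_integral_cong) (simp add: ac_simps)
  also have "\<dots> = (\<Sum>y\<in>A'. ennreal (pmf (P x) y * v y))"
    using assms by (subst nn_integral_indicator_finite) (auto simp: ennreal_mult)
  also have "\<dots> = ennreal (P22 P A' v x)"
    unfolding P22_def using assms(2) by (intro sum_ennreal) simp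
  finally show ?thesis .
qed

lemma killed_step_power_eq_P22_power:
  assumes "finite A'" "\<And>y. y \<in> A' \<Longrightarrow> 0 \<le> v y"
  shows "(killed_step P A' ^^ j) (\<lambda>y. ennreal (v y)) x = ennreal ((P22 P A' ^^ j) v x)"
proof (induction j arbitrary: x)
  case (Suc j)
  have "(killed_step P A' ^^ j) (\<lambda>y. ennreal (v y)) = (\<lambda>y. ennreal ((P22 P A' ^^ j) v y))"
    by (rule ext) (rule Suc.IH)
  moreover have "\<And>y. y \<in> A' \<Longrightarrow> 0 \<le> (P22 P A' ^^ j) v y"
    by (rule P22_power_nonneg[OF assms(2)])
  ultimately show ?case
    using killed_step_eq_P22[OF assms(1), of "(P22 P A' ^^ j) v" P x] by simp
qed simp

lemma P22_power_partial_sums: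
  assumes v: "\<And>y. y \<in> A' \<Longrightarrow> v y - P22 P A' v y = h y" and "x \<in> A'"
  shows "(\<Sum>j<N. (P22 P A' ^^ j) h x) = v x - (P22 P A' ^^ N) v x"
  using assms(2)
proof (induction N arbitrary: x)
  case (Suc N)
  have "(\<Sum>j<Suc N. (P22 P A' ^^ j) h x) = h x + P22 P A' (\<lambda>y. \<Sum>j<N. (P22 P A' ^^ j) h y) x"
    unfolding sum.lessThan_Suc_shift by (simp add: P22_sum)
  also have "\<dots> = h x + P22 P A' (\<lambda>y. v y - (P22 P A' ^^ N) v y) x"
    using Suc.IH by (simp cong: P22_cong)
  also have "\<dots> = v x - (P22 P A' ^^ Suc N) v x"
    using v[OF Suc.prems] by (simp add: P22_diff)
  finally show ?case .
qed simp

text \<open>Injectivity of \<open>I - P\<^sub>2\<^sub>2\<close> identifies \<open>v\<close> with the sum of the Neumann series, whose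
  partial sums \<open>v - P\<^sub>2\<^sub>2\<^sup>N v\<close> are bounded; no spectral radius bound is needed.\<close>
lemma P22_neumann_series:
  assumes "finite A'" and inj: "inj_on (IminusP22 P A') (extensional A')"
    and v: "v \<in> extensional A'" "IminusP22 P A' v = restrict h A'"
    and h: "\<And>y. y \<in> A' \<Longrightarrow> 0 \<le> h y" and "x \<in> A'"
  shows "(\<lambda>j. (P22 P A' ^^ j) h x) sums v x"
proof -
  let ?T = "P22 P A'"
  have v_eq: "v y - ?T v y = h y" if "y \<in> A'" for y
    using fun_cong[OF v(2), of y] that by (simp add: IminusP22_eq)
  define c where "c = (\<Sum>y\<in>A'. \<bar>v y\<bar>)"
  have v_bound: "\<bar>v y\<bar> \<le> c" if "y \<in> A'" for y
    unfolding c_def by (rule member_le_sum[OF that]) (simp_all add: assms(1))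
  have partial_le: "(\<Sum>j<N. (?T ^^ j) h y) \<le> v y + c" if "y \<in> A'" for N y
  proof -
    have "\<bar>(?T ^^ N) v y\<bar> \<le> c" by (rule P22_power_bounded[OF assms(1) v_bound that])
    then show ?thesis using P22_power_partial_sums[OF v_eq that, of N] by linarith
  qed
  have summable: "summable (\<lambda>j. (?T ^^ j) h y)" if "y \<in> A'" for y
    by (rule summableI_nonneg_bounded[OF P22_power_nonneg[OF h that] partial_le[OF that]])
  define W where "W = restrict (\<lambda>y. \<Sum>j. (?T ^^ j) h y) A'"
  have W_sums: "(\<lambda>j. (?T ^^ j) h y) sums W y" if "y \<in> A'" for y
    using summable[OF that] that by (simp add: W_def summable_sums)
  have "W y - ?T W y = h y" if "y \<in> A'" for y
  proof -
    have "(\<lambda>j. (?T ^^ Suc j) h y) sums ?T W y"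
      using P22_sums[of A' "\<lambda>j. (?T ^^ j) h" W P y] W_sums by simp
    then have "(\<lambda>j. (?T ^^ j) h y) sums (?T W y + h y)"
      using sums_Suc_iff[of "\<lambda>j. (?T ^^ j) h y"] by simp
    with W_sums[OF that] show ?thesis using sums_unique2 by fastforce
  qed
  then have "IminusP22 P A' W = IminusP22 P A' v"
    unfolding IminusP22_eq v(2)[unfolded IminusP22_eq] by (intro restrict_ext) simp
  then have "W = v"
    by (rule inj_onD[OF inj]) (simp_all add: W_def v(1))
  then show ?thesis using W_sums[OF \<open>x \<in> A'\<close>] by simp
qed

lemma green_eq_beta:
  assumes A: "finite A" "z \<in> A" and inv: "IminusP22_invertible P (A - {z})"
    and h: "\<forall>x\<in>A. 0 \<le> h x"
  shows "green P (A - {z}) (\<lambda>y. ennreal (h y)) z = ennreal (beta P A z h)"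
    and "0 \<le> beta P A z h"
proof -
  define A' where "A' = A - {z}"
  define v where "v = inv_into (extensional A') (IminusP22 P A') (restrict h A')"
  have fin: "finite A'" using A by (simp add: A'_def)
  have bij: "bij_betw (IminusP22 P A') (extensional A') (extensional A')"
    using inv by (simp add: IminusP22_invertible_def A'_def)
  then have h_range: "restrict h A' \<in> IminusP22 P A' ` extensional A'"
    by (simp add: bij_betw_def)
  have v: "v \<in> extensional A'" "IminusP22 P A' v = restrict h A'"
    unfolding v_def by (rule inv_into_into[OF h_range], rule f_inv_into_f[OF h_range])
  have h': "\<And>y. y \<in> A' \<Longrightarrow> 0 \<le> h y" using h by (simp add: A'_def)
  have series: "(\<lambda>j. (P22 P A' ^^ j) h y) sums v y" if "y \<in> A'" for y
    by (rule P22_neumann_series[OF fin bij_betw_imp_inj_on[OF bij] v h' that])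
  have v_nonneg: "0 \<le> v y" if "y \<in> A'" for y
    by (rule sums_le[OF _ sums_zero series[OF that]]) (rule P22_power_nonneg[OF h' that])
  have green_v: "green P A' (\<lambda>y. ennreal (h y)) y = ennreal (v y)" if "y \<in> A'" for y
  proof -
    have "green P A' (\<lambda>y. ennreal (h y)) y = (\<Sum>j. ennreal ((P22 P A' ^^ j) h y))"
      unfolding green_def by (simp only: killed_step_power_eq_P22_power[OF fin h'])
    also have "\<dots> = ennreal (v y)"
      by (rule suminf_ennreal_eq[OF P22_power_nonneg[OF h' that] series[OF that]])
    finally show ?thesis .
  qed
  have beta: "beta P A z h = h z + P22 P A' v z"
    by (simp only: beta_def Let_def A'_def[symmetric] v_def[symmetric] P22_def)
  have nonneg: "0 \<le> h z" "0 \<le> P22 P A' v z"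
    using h A(2) P22_nonneg[of A' v P z] v_nonneg by auto
  have "green P A' (\<lambda>y. ennreal (h y)) z = h z + killed_step P A' (green P A' (\<lambda>y. ennreal (h y))) z"
    by (rule green_unfold)
  also have "\<dots> = h z + killed_step P A' (\<lambda>y. ennreal (v y)) z"
    using killed_step_cong[of A' "green P A' (\<lambda>y. ennreal (h y))" "\<lambda>y. ennreal (v y)" P z] green_v
    by simp
  also have "\<dots> = ennreal (beta P A z h)"
    using killed_step_eq_P22[OF fin v_nonneg] nonneg by (simp add: beta)
  finally show "green P (A - {z}) (\<lambda>y. ennreal (h y)) z = ennreal (beta P A z h)"
    by (simp only: A'_def)
  show "0 \<le> beta P A z h"
    using nonneg by (simp add: beta)
qed

lemma beta_has_sum:
  fixes P :: "'a::countable \<Rightarrow> 'a pmf" and g :: "'a \<Rightarrow> real"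
  assumes A: "finite A" "z \<in> A" and inv: "IminusP22_invertible P (A - {z})" and g: "\<forall>x. 0 \<le> g x"
  shows "((\<lambda>x. beta P A z (\<lambda>y. if y = x then 1 else 0) * g x) has_sum beta P A z g) UNIV"
proof -
  let ?b = "\<lambda>x. beta P A z (\<lambda>y. if y = x then 1 else 0)"
  have b: "green P (A - {z}) (indicator {x}) z = ennreal (?b x)" "0 \<le> ?b x" for x
  proof -
    have "indicator {x} = (\<lambda>y. ennreal (if y = x then 1 else 0))"
      by (auto simp: indicator_def)
    then show "green P (A - {z}) (indicator {x}) z = ennreal (?b x)" "0 \<le> ?b x"
      using green_eq_beta[OF A inv, of "\<lambda>y. if y = x then 1 else 0"] by auto
  qed
  have b_outside: "?b x = 0" if "x \<notin> A" for x
  proof -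
    have "green P (A - {z}) (indicator {x}) z \<le> green P (A - {z}) (\<lambda>_. 0) z"
      using A that by (intro green_mono_on[where S=A]) (auto split: split_indicator)
    then show ?thesis using b[of x] by (simp add: green_zero)
  qed
  have "insert z (A - {z}) = A" using A by auto
  then have "ennreal (beta P A z g) = (\<Sum>y\<in>A. ennreal (g y) * ennreal (?b y))"
    using green_eq_beta(1)[OF A inv, of g] green_eq_sum[of "A - {z}" P "\<lambda>y. ennreal (g y)" z] A g
    by (simp add: b)
  also have "\<dots> = ennreal (\<Sum>y\<in>A. ?b y * g y)"
    using g b(2) by (simp add: ennreal_mult[symmetric] sum_ennreal mult.commute)
  finally have "beta P A z g = (\<Sum>y\<in>A. ?b y * g y)"
    using green_eq_beta(2)[OF A inv, of g] g b(2) by (simp add: sum_nonneg)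
  then have "((\<lambda>x. ?b x * g x) has_sum beta P A z g) A"
    using A by simp
  then show ?thesis
    by (rule has_sum_cong_neutral[THEN iffD2, rotated -1]) (auto simp: b_outside)
qed

lemma beta_mono:
  fixes g r :: "'a \<Rightarrow> real"
  assumes A: "finite A" "z \<in> A" and inv: "IminusP22_invertible P (A - {z})"
    and "\<forall>x. 0 \<le> g x \<and> g x \<le> r x"
  shows "beta P A z g \<le> beta P A z r"
proof -
  have r: "\<forall>x\<in>A. 0 \<le> r x" using assms(4) by (meson order_trans)
  have "green P (A - {z}) (\<lambda>y. ennreal (g y)) z \<le> green P (A - {z}) (\<lambda>y. ennreal (r y)) z"
    using assms(4) by (intro green_mono_on[where S=UNIV]) (auto intro: ennreal_leI)
  then have "ennreal (beta P A z g) \<le> ennreal (beta P A z r)"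
    using green_eq_beta(1)[OF A inv, of g] green_eq_beta(1)[OF A inv r] assms(4) by simp
  then show ?thesis using green_eq_beta(2)[OF A inv r] by simp
qed

lemma one_le_beta_one:
  assumes A: "finite A" "z \<in> A" and inv: "IminusP22_invertible P (A - {z})"
  shows "1 \<le> beta P A z (\<lambda>_. 1)"
proof -
  have "1 \<le> green P (A - {z}) (\<lambda>_. 1) z"
    by (subst green_unfold) simp
  then show ?thesis
    using green_eq_beta(1)[OF A inv, of "\<lambda>_. 1"] by simp
qed

lemma enn2real_occ_eq_beta:
  assumes "finite A" "z \<in> A" "IminusP22_invertible P (A - {z})" "\<forall>x. 0 \<le> g x"
  shows "enn2real (occ P (A - {z}) g z) = beta P A z g"
  using green_eq_beta[OF assms(1-3), of g] assms(4) by (simp add: occ_eq_green)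

section \<open>Drift bounds\<close>

lemma green_le_of_drift:
  fixes u g :: "'a \<Rightarrow> real"
  assumes g: "\<forall>x\<in>B. 0 \<le> g x" and u: "\<forall>x\<in>B. 0 \<le> u x"
    and drift: "\<forall>x\<in>B. (\<lambda>y. pmf (P x) y * g y) summable_on B \<and>
                  (\<Sum>\<^sub>\<infinity>y\<in>B. pmf (P x) y * g y) \<le> g x - u x"
    and "x \<in> B"
  shows "green P B (\<lambda>y. ennreal (u y)) x \<le> ennreal (g x)"
proof (rule green_le_supersolution[OF _ \<open>x \<in> B\<close>])
  fix y assume y: "y \<in> B"
  define s where "s = (\<Sum>\<^sub>\<infinity>w\<in>B. pmf (P y) w * g w)"
  have "killed_step P B (\<lambda>w. ennreal (g w)) y = ennreal s"
    unfolding s_def using g drift y by (intro killed_step_infsum) auto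
  moreover have "0 \<le> s" unfolding s_def using g by (intro infsum_nonneg) auto
  moreover have "s \<le> g y - u y" using drift y by (simp add: s_def)
  then have "u y + s \<le> g y" by linarith
  ultimately show "ennreal (u y) + killed_step P B (\<lambda>w. ennreal (g w)) y \<le> ennreal (g y)"
    using u y by (simp add: ennreal_plus[symmetric] ennreal_leI del: ennreal_plus)
qed

text \<open>Cut an excursion from \<open>z\<close> at its first exit from \<open>A\<close>; what follows the exit is
  controlled by \<open>g\<close>.\<close>
lemma green_le_green_exit:
  fixes g h :: "'a \<Rightarrow> real"
  assumes "z \<in> A"
    and bound: "\<And>w. w \<notin> A \<Longrightarrow> green P (-{z}) u w \<le> ennreal (g w)"
    and g: "\<And>w. w \<notin> A \<Longrightarrow> 0 \<le> g w"
    and exit: "\<forall>x\<in>A. (\<lambda>y. pmf (P x) y * g y) summable_on (-A) \<and>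
                   (\<Sum>\<^sub>\<infinity>y\<in>-A. pmf (P x) y * g y) \<le> h x"
  shows "green P (-{z}) u z \<le> green P (A - {z}) u z + green P (A - {z}) (\<lambda>y. ennreal (h y)) z"
proof -
  have exit_step: "killed_step P (-A) (green P (-{z}) u) y \<le> ennreal (h y)" if "y \<in> A" for y
  proof -
    have "killed_step P (-A) (green P (-{z}) u) y \<le> killed_step P (-A) (\<lambda>w. ennreal (g w)) y"
      using bound by (intro killed_step_mono) auto
    also have "\<dots> = ennreal (\<Sum>\<^sub>\<infinity>w\<in>-A. pmf (P y) w * g w)"
      using g exit that by (intro killed_step_infsum) auto
    also have "\<dots> \<le> ennreal (h y)" using exit that by (simp add: ennreal_leI)
    finally show ?thesis .
  qed
  have "-{z} - (A - {z}) = -A" using \<open>z \<in> A\<close> by auto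
  then have "green P (-{z}) u z
      \<le> green P (A - {z}) (\<lambda>y. u y + killed_step P (-A) (green P (-{z}) u) y) z"
    using green_le_resolvent[of "A - {z}" "-{z}" P u z] by auto
  also have "\<dots> = green P (A - {z}) u z + green P (A - {z}) (killed_step P (-A) (green P (-{z}) u)) z"
    by (rule green_add)
  also have "\<dots> \<le> green P (A - {z}) u z + green P (A - {z}) (\<lambda>y. ennreal (h y)) z"
    using \<open>z \<in> A\<close> exit_step by (intro add_left_mono green_mono_on[where S=A]) auto
  finally show ?thesis .
qed

lemma green_return_time_finite:
  assumes "positive_recurrent P" and g: "\<forall>x\<in>-{z}. 0 \<le> g x"
    and drift: "\<forall>x\<in>-{z}. (\<lambda>y. pmf (P x) y * g y) summable_on (-{z}) \<and>
                  (\<Sum>\<^sub>\<infinity>y\<in>-{z}. pmf (P x) y * g y) \<le> g x - 1"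
  shows "green P (-{z}) (\<lambda>_. 1) x < \<top>"
proof (cases "x = z")
  case True
  then show ?thesis using assms(1) by (simp add: positive_recurrent_def occ_eq_green)
next
  case False
  then have "green P (-{z}) (\<lambda>_. 1) x \<le> ennreal (g x)"
    using g by (intro green_le_of_drift[where u="\<lambda>_. 1", OF _ _ drift, simplified]) auto
  then show ?thesis using ennreal_less_top le_less_trans by blast
qed

lemma green_return_sandwich:
  fixes u d g h :: "'a \<Rightarrow> real"
  assumes A: "finite A" "z \<in> A" and inv: "IminusP22_invertible P (A - {z})"
    and u: "\<forall>x. 0 \<le> u x \<and> u x \<le> d x" and h: "\<forall>x\<in>A. 0 \<le> h x" and g: "\<forall>x\<in>-{z}. 0 \<le> g x"
    and drift: "\<forall>x\<in>-{z}. (\<lambda>y. pmf (P x) y * g y) summable_on (-{z}) \<and>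
                  (\<Sum>\<^sub>\<infinity>y\<in>-{z}. pmf (P x) y * g y) \<le> g x - d x"
    and exit: "\<forall>x\<in>A. (\<lambda>y. pmf (P x) y * g y) summable_on (-A) \<and>
                   (\<Sum>\<^sub>\<infinity>y\<in>-A. pmf (P x) y * g y) \<le> h x"
  shows "green P (-{z}) (\<lambda>y. ennreal (u y)) z < \<top>"
    and "beta P A z u \<le> enn2real (green P (-{z}) (\<lambda>y. ennreal (u y)) z)"
    and "enn2real (green P (-{z}) (\<lambda>y. ennreal (u y)) z) \<le> beta P A z u + beta P A z h"
proof -
  let ?G = "green P (-{z}) (\<lambda>y. ennreal (u y)) z"
  have bound: "green P (-{z}) (\<lambda>y. ennreal (u y)) w \<le> ennreal (g w)" if "w \<notin> A" for w
  proof -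
    have w: "w \<in> -{z}" using A(2) that by auto
    have "green P (-{z}) (\<lambda>y. ennreal (u y)) w \<le> green P (-{z}) (\<lambda>y. ennreal (d y)) w"
      using u by (intro green_mono_on[where S=UNIV]) (auto intro: ennreal_leI)
    also have "\<dots> \<le> ennreal (g w)"
      using u g by (intro green_le_of_drift[OF _ _ drift w]) (auto intro: order_trans)
    finally show ?thesis .
  qed
  have g_out: "0 \<le> g w" if "w \<notin> A" for w using g A(2) that by auto
  have u': "\<forall>x. 0 \<le> u x" using u by simp
  have beta_u: "green P (A - {z}) (\<lambda>y. ennreal (u y)) z = ennreal (beta P A z u)" "0 \<le> beta P A z u"
    using green_eq_beta[OF A inv] u' by auto
  have beta_h: "green P (A - {z}) (\<lambda>y. ennreal (h y)) z = ennreal (beta P A z h)" "0 \<le> beta P A z h"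
    using green_eq_beta[OF A inv] h by auto
  have lower: "ennreal (beta P A z u) \<le> ?G"
    using green_mono_set[of "A - {z}" "-{z}" P "\<lambda>y. ennreal (u y)" z] beta_u by auto
  have upper: "?G \<le> ennreal (beta P A z u + beta P A z h)"
    using green_le_green_exit[OF A(2) bound g_out exit] beta_u beta_h by (simp add: ennreal_plus)
  then show "?G < \<top>" using ennreal_less_top le_less_trans by blast
  then obtain m where m: "?G = ennreal m" "0 \<le> m" by (cases ?G) auto
  show "beta P A z u \<le> enn2real ?G" using lower m by simp
  show "enn2real ?G \<le> beta P A z u + beta P A z h"
    using upper m beta_u beta_h by (simp del: ennreal_plus)
qed

lemma ratio_difference_bound:
  fixes a t b c kr k1 k2 m1 m2 :: real
  assumes "0 < a" "a \<le> t" "t \<le> a + c" "0 \<le> b"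
    and "0 \<le> k1" "k1 \<le> kr" "0 \<le> k2" "k2 \<le> kr"
    and "k1 \<le> m1" "m1 \<le> k1 + b" "k2 \<le> m2" "m2 \<le> k2 + b"
  shows "\<bar>(k1 - k2) / a - (m1 - m2) / t\<bar> \<le> 2 * max (b / a) (kr / a * (c / a))"
proof -
  define d where "d = t - a"
  define k where "k = k1 - k2"
  define e where "e = (m1 - k1) - (m2 - k2)"
  have "0 < t" using assms by linarith
  have eq: "(k1 - k2) / a - (m1 - m2) / t = (k * d - a * e) / (a * t)"
    unfolding d_def k_def e_def using \<open>0 < a\<close> \<open>0 < t\<close> by (simp add: field_simps)
  have "\<bar>k\<bar> \<le> kr" "\<bar>e\<bar> \<le> b" "0 \<le> d" "d \<le> c"
    using assms unfolding k_def e_def d_def by auto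
  then have "\<bar>k * d\<bar> \<le> kr * c" by (simp add: abs_mult mult_mono)
  moreover have "\<bar>a * e\<bar> \<le> a * b" using \<open>\<bar>e\<bar> \<le> b\<close> \<open>0 < a\<close> by (simp add: abs_mult)
  ultimately have num: "\<bar>k * d - a * e\<bar> \<le> kr * c + a * b" by linarith
  have "\<bar>(k * d - a * e) / (a * t)\<bar> \<le> (kr * c + a * b) / (a * t)"
    using num \<open>0 < a\<close> \<open>0 < t\<close> by (simp add: divide_right_mono)
  also have "\<dots> \<le> (kr * c + a * b) / (a * a)"
  proof (rule divide_left_mono)
    show "0 \<le> kr * c + a * b" using num by linarith
    show "a * a \<le> a * t" using \<open>0 < a\<close> \<open>a \<le> t\<close> by simp
    show "0 < a * t * (a * a)" using \<open>0 < a\<close> \<open>0 < t\<close> by simp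
  qed
  also have "\<dots> = b / a + kr / a * (c / a)" using \<open>0 < a\<close> by (simp add: field_simps)
  also have "\<dots> \<le> 2 * max (b / a) (kr / a * (c / a))" by linarith
  finally show ?thesis using eq by simp
qed

lemma rtv_le_of_sandwich:
  fixes r w \<pi> :: "'a \<Rightarrow> real" and \<kappa> \<mu> :: "('a \<Rightarrow> real) \<Rightarrow> real"
  defines "a \<equiv> \<kappa> (\<lambda>_. 1)" and "t \<equiv> \<mu> (\<lambda>_. 1)"
  assumes r: "\<forall>x. 0 \<le> r x" and a: "0 < a" "a \<le> t" "t \<le> a + c" and b: "0 \<le> b"
    and w_sum: "\<And>g. \<forall>x. 0 \<le> g x \<and> g x \<le> r x \<Longrightarrow> ((\<lambda>x. w x * g x) has_sum \<kappa> g) UNIV"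
    and \<pi>_sum: "\<And>g. \<forall>x. 0 \<le> g x \<and> g x \<le> r x \<Longrightarrow> ((\<lambda>x. \<pi> x * g x) has_sum \<mu> g / t) UNIV"
    and \<kappa>_bounds: "\<And>g. \<forall>x. 0 \<le> g x \<and> g x \<le> r x \<Longrightarrow> 0 \<le> \<kappa> g \<and> \<kappa> g \<le> \<kappa> r"
    and sandwich: "\<And>g. \<forall>x. 0 \<le> g x \<and> g x \<le> r x \<Longrightarrow> \<kappa> g \<le> \<mu> g \<and> \<mu> g \<le> \<kappa> g + b"
  shows "rtv r (\<lambda>x. w x / a) \<pi> \<le> 2 * max (b / a) (\<kappa> r / a * (c / a))"
proof -
  have bound: "\<bar>(\<Sum>\<^sub>\<infinity>x. w x / a * f x) - (\<Sum>\<^sub>\<infinity>x. \<pi> x * f x)\<bar> \<le> 2 * max (b / a) (\<kappa> r / a * (c / a))"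
    if f: "\<forall>x. \<bar>f x\<bar> \<le> r x" for f
  proof -
    define fp where "fp x = max (f x) 0" for x
    define fm where "fm x = max (- f x) 0" for x
    have fpm: "\<forall>x. 0 \<le> fp x \<and> fp x \<le> r x" "\<forall>x. 0 \<le> fm x \<and> fm x \<le> r x"
      using f r by (auto simp: fp_def fm_def abs_le_iff)
    have split: "\<nu> x * f x = \<nu> x * fp x + - (\<nu> x * fm x)" for \<nu> :: "'a \<Rightarrow> real" and x
      by (simp add: fp_def fm_def algebra_simps max_def)
    have "((\<lambda>x. w x * f x) has_sum \<kappa> fp + - \<kappa> fm) UNIV"
      unfolding split using w_sum fpm by (intro has_sum_add has_sum_uminus[THEN iffD2]) auto
    then have "(\<Sum>\<^sub>\<infinity>x. 1 / a * (w x * f x)) = 1 / a * (\<kappa> fp + - \<kappa> fm)"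
      by (intro infsumI has_sum_cmult_right)
    then have "(\<Sum>\<^sub>\<infinity>x. w x / a * f x) = \<kappa> fp / a - \<kappa> fm / a"
      by (simp add: diff_divide_distrib)
    moreover have "(\<Sum>\<^sub>\<infinity>x. \<pi> x * f x) = \<mu> fp / t + - (\<mu> fm / t)"
      unfolding split using \<pi>_sum fpm by (intro infsumI has_sum_add has_sum_uminus[THEN iffD2]) auto
    ultimately show ?thesis
      using ratio_difference_bound[OF a b, of "\<kappa> fp" "\<kappa> r" "\<kappa> fm" "\<mu> fp" "\<mu> fm"]
        \<kappa>_bounds[OF fpm(1)] \<kappa>_bounds[OF fpm(2)] sandwich[OF fpm(1)] sandwich[OF fpm(2)]
      by (simp add: diff_divide_distrib)
  qed
  have "{\<bar>(\<Sum>\<^sub>\<infinity>x. w x / a * f x) - (\<Sum>\<^sub>\<infinity>x. \<pi> x * f x)\<bar> | f. \<forall>x. \<bar>f x\<bar> \<le> r x} \<noteq> {}"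
    using r by (auto intro!: exI[of _ "\<lambda>_. 0"])
  then show ?thesis
    unfolding rtv_def by (rule cSup_least) (use bound in auto)
qed

theorem theorem4p1:
  fixes P :: "'a::countable \<Rightarrow> 'a pmf" and \<pi> :: "'a \<Rightarrow> real"
    and z :: 'a and A :: "'a set"
    and r g1 g2 h1 h2 :: "'a \<Rightarrow> real"
  assumes irred: "irreducible_chain P"
    and posrec: "positive_recurrent P"
    and stat: "stationary_distribution P \<pi>"
    and A: "finite A" "z \<in> A"
    and inv: "IminusP22_invertible P (A - {z})"
    and r_nonneg: "\<forall>x. r x \<ge> 0"
    and g_nonneg: "\<forall>x\<in>-{z}. g1 x \<ge> 0 \<and> g2 x \<ge> 0"
    and h_nonneg: "\<forall>x\<in>A. h1 x \<ge> 0 \<and> h2 x \<ge> 0"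
    and drift1: "\<forall>x\<in>-{z}. (\<lambda>y. pmf (P x) y * g1 y) summable_on (-{z}) \<and>
                   (\<Sum>\<^sub>\<infinity>y\<in>-{z}. pmf (P x) y * g1 y) \<le> g1 x - r x"
    and drift2: "\<forall>x\<in>-{z}. (\<lambda>y. pmf (P x) y * g2 y) summable_on (-{z}) \<and>
                   (\<Sum>\<^sub>\<infinity>y\<in>-{z}. pmf (P x) y * g2 y) \<le> g2 x - 1"
    and out1: "\<forall>x\<in>A. (\<lambda>y. pmf (P x) y * g1 y) summable_on (-A) \<and>
                   (\<Sum>\<^sub>\<infinity>y\<in>-A. pmf (P x) y * g1 y) \<le> h1 x"
    and out2: "\<forall>x\<in>A. (\<lambda>y. pmf (P x) y * g2 y) summable_on (-A) \<and>
                   (\<Sum>\<^sub>\<infinity>y\<in>-A. pmf (P x) y * g2 y) \<le> h2 x"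
  shows "let \<kappa> = (\<lambda>f. enn2real (occ P (A - {z}) f z));
             \<pi>t = (\<lambda>f. \<kappa> f / \<kappa> (\<lambda>_. 1));
             \<pi>s = (\<lambda>x. \<pi>t (\<lambda>y. if y = x then 1 else 0))
         in rtv r \<pi>s \<pi> \<le> 2 * max (beta P A z h1 / \<kappa> (\<lambda>_. 1))
                                     (\<pi>t r * (beta P A z h2 / \<kappa> (\<lambda>_. 1)))"
proof -
  define \<mu> where "\<mu> g = enn2real (green P (-{z}) (\<lambda>y. ennreal (g y)) z)" for g
  have g1: "\<forall>x\<in>-{z}. 0 \<le> g1 x" and g2: "\<forall>x\<in>-{z}. 0 \<le> g2 x"
    and h1: "\<forall>x\<in>A. 0 \<le> h1 x" and h2: "\<forall>x\<in>A. 0 \<le> h2 x"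
    using g_nonneg h_nonneg by auto
  note return_finite = green_return_time_finite[OF posrec g2 drift2]
  note sandwich = green_return_sandwich[OF A inv _ h1 g1 drift1 out1]
  note sandwich_one = green_return_sandwich[OF A inv _ h2 g2 drift2 out2, where u="\<lambda>_. 1", simplified]
  have "rtv r (\<lambda>x. beta P A z (\<lambda>y. if y = x then 1 else 0) / beta P A z (\<lambda>_. 1)) \<pi>
      \<le> 2 * max (beta P A z h1 / beta P A z (\<lambda>_. 1))
                 (beta P A z r / beta P A z (\<lambda>_. 1) * (beta P A z h2 / beta P A z (\<lambda>_. 1)))"
  proof (rule rtv_le_of_sandwich[where \<mu>=\<mu>, OF r_nonneg], goal_cases)
    case 1
    show ?case using one_le_beta_one[OF A inv] by simp
  next
    case 2
    show ?case using sandwich_one by (simp add: \<mu>_def)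
  next
    case 3
    show ?case using sandwich_one by (simp add: \<mu>_def)
  next
    case 4
    show ?case using green_eq_beta(2)[OF A inv h1] .
  next
    case (5 g)
    then show ?case using beta_has_sum[OF A inv, of g] by simp
  next
    case (6 g)
    then show ?case
      using stationary_has_sum_green_ratio[OF stat return_finite, of g] sandwich(1)[of g]
      by (simp add: \<mu>_def)
  next
    case (7 g)
    then show ?case using green_eq_beta(2)[OF A inv, of g] beta_mono[OF A inv] by simp
  next
    case (8 g)
    then show ?case using sandwich(2,3)[of g] by (simp add: \<mu>_def)
  qed
  then show ?thesis
    using r_nonneg by (simp add: Let_def enn2real_occ_eq_beta[OF A inv])
qed

end
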